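(* Let $\gamma$ be a gauge on $\mathbb{R}^d$, $D\subset\mathbb{R}^d$ finite, and let $C_\pi$ be an elementary convex set for $D$ determined by a family $\pi=(p_d)_{d\in D}$ of points of $B_{\gamma^\circ}$, such that $C_\pi\neq\{d\}$ for every $d\in D$. Then $C_\pi$ is bounded if and only if $\bigcap_{d\in D}\partial\gamma^\circ(p_d)=\emptyset$.
   Context: A gauge $\gamma$ on $\mathbb{R}^d$ is the Minkowski functional of a convex compact set $B_\gamma$ with the origin in its interior (not necessarily symmetric); $\gamma^\circ(p)=\max\{\langle p,x\rangle:\gamma(x)=1\}$ is the dual gauge with unit ball $B_{\gamma^\circ}$, and $\partial\gamma^\circ$ its subdifferential (for $\gamma^\circ(p)=1$, $\partial\gamma^\circ(p)=F(p)$ below). For $p\in B_{\gamma^\circ}$: if $\gamma^\circ(p)=1$, $N(p)$ is the cone $\mathbb{R}_{\ge0}F(p)$ generated by the exposed face $F(p)=\{x\in B_\gamma:\langle p,x\rangle=1\}$; if $\gamma^\circ(p)<1$, $N(p)=\{0\}$. For a finite set $S$ and $\pi=(p_s)_{s\in S}\subset B_{\gamma^\circ}$, $C_\pi=\bigcap_{s\in S}(s+N(p_s))$; a nonempty $C_\pi$ is an elementary convex set for $S$. *)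

theory Defs
  imports "HOL-Analysis.Analysis"
begin

text \<open>A gauge is given by its defining convex compact set B with 0 in its interior.\<close>
definition is_gauge_set :: "'a::euclidean_space set \<Rightarrow> bool" where
  "is_gauge_set B \<longleftrightarrow> convex B \<and> compact B \<and> 0 \<in> interior B"

definition gauge_fn :: "'a::euclidean_space set \<Rightarrow> 'a \<Rightarrow> real" where
  "gauge_fn B x = Inf {t. t > 0 \<and> x \<in> (\<lambda>y. t *\<^sub>R y) ` B}"

definition dual_gauge :: "'a::euclidean_space set \<Rightarrow> 'a \<Rightarrow> real" where
  "dual_gauge B p = Sup {p \<bullet> x | x. gauge_fn B x = 1}"

definition gauge_ball :: "'a::euclidean_space set \<Rightarrow> 'a set" where
  "gauge_ball B = {x. gauge_fn B x \<le> 1}"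

definition dual_ball :: "'a::euclidean_space set \<Rightarrow> 'a set" where
  "dual_ball B = {p. dual_gauge B p \<le> 1}"

definition subdiff :: "('a::euclidean_space \<Rightarrow> real) \<Rightarrow> 'a \<Rightarrow> 'a set" where
  "subdiff f p = {x. \<forall>q. f q \<ge> f p + x \<bullet> (q - p)}"

definition exposed_face :: "'a::euclidean_space set \<Rightarrow> 'a \<Rightarrow> 'a set" where
  "exposed_face B p = {x \<in> gauge_ball B. p \<bullet> x = 1}"

definition normal_cone :: "'a::euclidean_space set \<Rightarrow> 'a \<Rightarrow> 'a set" where
  "normal_cone B p = (if dual_gauge B p = 1
     then {c *\<^sub>R x | c x. c \<ge> 0 \<and> x \<in> exposed_face B p} else {0})"

definition elem_set :: "'a::euclidean_space set \<Rightarrow> 'a set \<Rightarrow> ('a \<Rightarrow> 'a) \<Rightarrow> 'a set" where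
  "elem_set B S p = (\<Inter>s\<in>S. (\<lambda>v. s + v) ` normal_cone B (p s))"

end

theory Submission
  imports Defs
begin

text \<open>
  Each \<open>C\<^sub>\<pi>\<close> is an intersection of translates \<open>d + N(p\<^sub>d)\<close> of closed convex cones, so it is
  bounded exactly when the cones have no common nonzero direction: a common direction gives a
  ray inside \<open>C\<^sub>\<pi>\<close>, and conversely normalized points of \<open>C\<^sub>\<pi>\<close> running off to infinity
  accumulate at such a direction. Since \<open>C\<^sub>\<pi> \<noteq> {d}\<close>, every \<open>p\<^sub>d\<close> lies on the dual unit sphere, where
  \<open>N(p\<^sub>d)\<close> is the cone over the exposed face \<open>F(p\<^sub>d) = \<partial>\<gamma>\<degree>(p\<^sub>d)\<close>. All these faces lie on the
  unit sphere of \<open>\<gamma>\<close>, so a common nonzero direction, rescaled to \<open>\<gamma> = 1\<close>, is a common point of the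
  faces, and vice versa.
\<close>

lemma translated_cones_common_direction_unbounded:
  fixes K :: "'i \<Rightarrow> 'a::real_normed_vector set"
  assumes "\<And>i. i \<in> I \<Longrightarrow> conic (K i)" "\<And>i. i \<in> I \<Longrightarrow> convex (K i)"
    and c: "c \<in> (\<Inter>i\<in>I. (\<lambda>v. a i + v) ` K i)"
    and x: "x \<in> (\<Inter>i\<in>I. K i)" "x \<noteq> 0"
  shows "\<not> bounded (\<Inter>i\<in>I. (\<lambda>v. a i + v) ` K i)"
proof
  define C where "C = (\<Inter>i\<in>I. (\<lambda>v. a i + v) ` K i)"
  have ray: "c + t *\<^sub>R x \<in> C" if "t \<ge> 0" for t
  proof -
    have "c + t *\<^sub>R x \<in> (\<lambda>v. a i + v) ` K i" if i: "i \<in> I" for i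
    proof -
      have "c - a i \<in> K i" using c i by force
      moreover have "t *\<^sub>R x \<in> K i" using x i \<open>t \<ge> 0\<close> assms(1) conic_mul by blast
      ultimately have "(c - a i) + t *\<^sub>R x \<in> K i"
        using convex_cone_add assms(1,2)[OF i] by (auto simp: convex_cone_def)
      then show ?thesis by (force intro: image_eqI[where x = "(c - a i) + t *\<^sub>R x"])
    qed
    then show ?thesis by (simp add: C_def)
  qed
  assume "bounded C"
  then obtain M where M: "\<And>z. z \<in> C \<Longrightarrow> norm z \<le> M"
    unfolding C_def bounded_iff by blast
  define t where "t = (\<bar>M\<bar> + norm c + 1) / norm x"
  have "t \<ge> 0" by (simp add: t_def)
  have "norm (t *\<^sub>R x) = \<bar>M\<bar> + norm c + 1" using x(2) by (simp add: t_def)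
  moreover have "norm (t *\<^sub>R x) \<le> norm (c + t *\<^sub>R x) + norm c"
    by (metis add_diff_cancel_left' norm_triangle_ineq4)
  moreover have "norm (c + t *\<^sub>R x) \<le> M" using M ray \<open>t \<ge> 0\<close> by blast
  ultimately show False by linarith
qed

lemma closed_conic_contains_limit_direction:
  fixes y :: "nat \<Rightarrow> 'a::real_normed_vector"
  assumes "closed K" "conic K" "\<And>n. y n - a \<in> K"
    and "filterlim (\<lambda>n. norm (y n)) at_top sequentially"
    and "(\<lambda>n. y n /\<^sub>R norm (y n)) \<longlonglongrightarrow> l"
  shows "l \<in> K"
proof -
  have "(\<lambda>n. inverse (norm (y n)) *\<^sub>R a) \<longlonglongrightarrow> 0"
    using tendsto_scaleR[OF tendsto_inverse_0_at_top[OF assms(4)] tendsto_const] by simp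
  from tendsto_diff[OF assms(5) this]
  have "(\<lambda>n. (y n - a) /\<^sub>R norm (y n)) \<longlonglongrightarrow> l" by (simp add: scaleR_diff_right)
  moreover have "(y n - a) /\<^sub>R norm (y n) \<in> K" for n
    using assms(2,3) by (simp add: conic_mul)
  ultimately show ?thesis
    using closed_sequentially[OF assms(1), of "\<lambda>n. (y n - a) /\<^sub>R norm (y n)"] by blast
qed

lemma unbounded_translated_cones_common_direction:
  fixes K :: "'i \<Rightarrow> 'a::euclidean_space set"
  assumes "\<And>i. i \<in> I \<Longrightarrow> closed (K i)" "\<And>i. i \<in> I \<Longrightarrow> conic (K i)"
    and "\<not> bounded (\<Inter>i\<in>I. (\<lambda>v. a i + v) ` K i)"
  obtains x where "x \<in> (\<Inter>i\<in>I. K i)" "x \<noteq> 0"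
proof -
  define C where "C = (\<Inter>i\<in>I. (\<lambda>v. a i + v) ` K i)"
  have "\<forall>n::nat. \<exists>y\<in>C. real n < norm y"
    using assms(3) unfolding C_def bounded_iff by (meson not_le)
  then obtain y where y: "\<And>n. y n \<in> C" "\<And>n. real n < norm (y n)" by metis
  then have "norm (y n) > 0" for n by (smt (verit) of_nat_0_le_iff)
  then have "y n /\<^sub>R norm (y n) \<in> sphere 0 1" for n by simp
  then obtain l r where l: "l \<in> sphere 0 1" and r: "strict_mono r"
    and lim: "((\<lambda>n. y n /\<^sub>R norm (y n)) \<circ> r) \<longlonglongrightarrow> l"
    using seq_compactE[OF compact_imp_seq_compact[OF compact_sphere], of "\<lambda>n. y n /\<^sub>R norm (y n)"]
    by blast
  have "filterlim (\<lambda>n. norm (y (r n))) at_top sequentially"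
  proof (rule filterlim_at_top_mono[OF filterlim_real_sequentially always_eventually], rule allI)
    fix n show "real n \<le> norm (y (r n))"
      using seq_suble[OF r, of n] y(2)[of "r n"] by linarith
  qed
  moreover have "y (r n) - a i \<in> K i" if "i \<in> I" for i n
    using y(1)[of "r n"] that by (force simp: C_def)
  ultimately have "l \<in> K i" if "i \<in> I" for i
    using closed_conic_contains_limit_direction[of "K i" "y \<circ> r" "a i" l] lim assms(1,2) that
    by (simp add: comp_def)
  with l that show ?thesis by fastforce
qed

lemma bounded_Inter_translated_cones_iff:
  fixes K :: "'i \<Rightarrow> 'a::euclidean_space set"
  assumes "\<And>i. i \<in> I \<Longrightarrow> closed (K i)" "\<And>i. i \<in> I \<Longrightarrow> conic (K i)"
    "\<And>i. i \<in> I \<Longrightarrow> convex (K i)"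
    and "(\<Inter>i\<in>I. (\<lambda>v. a i + v) ` K i) \<noteq> {}"
  shows "bounded (\<Inter>i\<in>I. (\<lambda>v. a i + v) ` K i) \<longleftrightarrow> (\<Inter>i\<in>I. K i) \<subseteq> {0}"
proof
  assume bounded: "bounded (\<Inter>i\<in>I. (\<lambda>v. a i + v) ` K i)"
  obtain c where c: "c \<in> (\<Inter>i\<in>I. (\<lambda>v. a i + v) ` K i)" using assms(4) by blast
  show "(\<Inter>i\<in>I. K i) \<subseteq> {0}"
  proof
    fix x assume x: "x \<in> (\<Inter>i\<in>I. K i)"
    show "x \<in> {0}"
    proof (rule ccontr)
      assume "x \<notin> {0}"
      then have "x \<noteq> 0" by simp
      from translated_cones_common_direction_unbounded[OF assms(2,3) c x this] bounded
      show False by contradiction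
    qed
  qed
next
  assume trivial: "(\<Inter>i\<in>I. K i) \<subseteq> {0}"
  show "bounded (\<Inter>i\<in>I. (\<lambda>v. a i + v) ` K i)"
  proof (rule ccontr)
    assume "\<not> bounded (\<Inter>i\<in>I. (\<lambda>v. a i + v) ` K i)"
    from unbounded_translated_cones_common_direction[OF assms(1,2) this]
    obtain x where "x \<in> (\<Inter>i\<in>I. K i)" "x \<noteq> 0" .
    with trivial show False by blast
  qed
qed

lemma gauge_set_radii:
  assumes "is_gauge_set B"
  obtains r R where "r > 0" "R > 0" "cball 0 r \<subseteq> B" "B \<subseteq> cball 0 R"
proof -
  from assms have "0 \<in> interior B" "compact B" by (auto simp: is_gauge_set_def)
  then obtain r where "r > 0" "cball 0 r \<subseteq> B" by (meson mem_interior_cball)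
  moreover from \<open>compact B\<close> obtain R where "R > 0" "B \<subseteq> cball 0 R"
    using compact_imp_bounded bounded_pos by (metis mem_cball_0 subsetI)
  ultimately show ?thesis using that by blast
qed

lemma gauge_scales_nonempty:
  assumes "is_gauge_set B"
  shows "{t. t > 0 \<and> x \<in> (\<lambda>y. t *\<^sub>R y) ` B} \<noteq> {}"
proof -
  obtain r where r: "r > 0" "cball 0 r \<subseteq> B" using gauge_set_radii[OF assms] by blast
  define t where "t = (norm x + 1) / r"
  have t: "t > 0" using r by (simp add: t_def add_nonneg_pos)
  have "norm (x /\<^sub>R t) \<le> r" using r t by (simp add: t_def field_simps)
  then have "x /\<^sub>R t \<in> B" using r by auto
  moreover have "x = t *\<^sub>R (x /\<^sub>R t)" using t by simp
  ultimately show ?thesis using t by blast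
qed

lemma norm_le_gauge_fn:
  assumes "is_gauge_set B" "R > 0" "B \<subseteq> cball 0 R"
  shows "norm x / R \<le> gauge_fn B x"
  unfolding gauge_fn_def
proof (rule cInf_greatest[OF gauge_scales_nonempty[OF assms(1)]])
  fix t assume "t \<in> {t. t > 0 \<and> x \<in> (\<lambda>y. t *\<^sub>R y) ` B}"
  then obtain b where b: "t > 0" "b \<in> B" "x = t *\<^sub>R b" by auto
  moreover have "norm b \<le> R" using b(2) assms(3) by auto
  ultimately have "norm x \<le> t * R" by (simp add: mult_left_mono)
  then show "norm x / R \<le> t" using assms(2) by (simp add: field_simps)
qed

lemma gauge_fn_pos:
  assumes "is_gauge_set B" "x \<noteq> 0"
  shows "0 < gauge_fn B x"
proof -
  obtain r R :: real where R: "R > 0" "B \<subseteq> cball 0 R"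
    by (rule gauge_set_radii[OF assms(1)])
  then have "0 < norm x / R" using assms(2) by simp
  also have "\<dots> \<le> gauge_fn B x" using norm_le_gauge_fn[OF assms(1) R] .
  finally show ?thesis .
qed

lemma gauge_fn_le_1:
  assumes "is_gauge_set B" "x \<in> B"
  shows "gauge_fn B x \<le> 1"
  unfolding gauge_fn_def
  by (rule cInf_lower) (use assms in \<open>auto intro!: bdd_belowI[where m = 0]\<close>)

lemma gauge_fn_scaleR:
  assumes "is_gauge_set B" "s > 0"
  shows "gauge_fn B (s *\<^sub>R x) = s * gauge_fn B x"
proof -
  define T where "T z = {t. t > 0 \<and> z \<in> (\<lambda>y. t *\<^sub>R y) ` B}" for z
  have ne: "T z \<noteq> {}" for z using gauge_scales_nonempty[OF assms(1)] by (simp add: T_def)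
  have bdd: "bdd_below (T z)" for z by (auto simp: T_def intro!: bdd_belowI[where m = 0])
  have T_scale: "c * t \<in> T (c *\<^sub>R z)" if "t \<in> T z" "c > 0" for c t z
  proof -
    from that obtain b where "t > 0" "b \<in> B" "z = t *\<^sub>R b" by (auto simp: T_def)
    with \<open>c > 0\<close> show ?thesis by (auto simp: T_def image_iff intro!: bexI[of _ b])
  qed
  have "Inf (T (s *\<^sub>R x)) / s \<le> Inf (T x)"
  proof (rule cInf_greatest[OF ne])
    fix t assume "t \<in> T x"
    then have "Inf (T (s *\<^sub>R x)) \<le> s * t" using T_scale assms(2) bdd by (simp add: cInf_lower)
    then show "Inf (T (s *\<^sub>R x)) / s \<le> t" using assms(2) by (simp add: field_simps)
  qed
  moreover have "s * Inf (T x) \<le> Inf (T (s *\<^sub>R x))"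
  proof (rule cInf_greatest[OF ne])
    fix u assume "u \<in> T (s *\<^sub>R x)"
    then have "inverse s * u \<in> T x" using T_scale[of u "s *\<^sub>R x" "inverse s"] assms(2) by simp
    then have "Inf (T x) \<le> u / s" using assms(2) bdd by (simp add: cInf_lower divide_inverse_commute)
    then show "s * Inf (T x) \<le> u" using assms(2) by (simp add: field_simps)
  qed
  ultimately show ?thesis using assms(2) unfolding gauge_fn_def T_def[symmetric]
    by (simp add: field_simps)
qed

lemma gauge_fn_normalize:
  assumes "is_gauge_set B" "v \<noteq> 0"
  shows "gauge_fn B (v /\<^sub>R gauge_fn B v) = 1"
  using gauge_fn_scaleR[OF assms(1), of "inverse (gauge_fn B v)" v] gauge_fn_pos[OF assms]
  by simp

lemma ex_gauge_fn_eq_1: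
  fixes B :: "'a::euclidean_space set"
  assumes "is_gauge_set B"
  obtains y where "gauge_fn B y = 1"
proof -
  obtain i :: 'a where "i \<in> Basis" using SOME_Basis by blast
  then show ?thesis using gauge_fn_normalize[OF assms, of i] nonzero_Basis that by blast
qed

lemma bdd_above_dual_gauge_set:
  assumes "is_gauge_set B"
  shows "bdd_above {q \<bullet> x | x. gauge_fn B x = 1}"
proof -
  obtain r R :: real where R: "R > 0" "B \<subseteq> cball 0 R" by (rule gauge_set_radii[OF assms])
  show ?thesis
  proof (rule bdd_aboveI[where M = "norm q * R"], clarify)
    fix x assume "gauge_fn B x = 1"
    then have "norm x / R \<le> 1" using norm_le_gauge_fn[OF assms R, of x] by simp
    then have "norm x \<le> R" using R(1) by (simp add: divide_le_eq_1)
    have "q \<bullet> x \<le> norm q * norm x" by (rule norm_cauchy_schwarz)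
    also have "\<dots> \<le> norm q * R" using \<open>norm x \<le> R\<close> by (simp add: mult_left_mono)
    finally show "q \<bullet> x \<le> norm q * R" .
  qed
qed

lemma inner_le_dual_gauge:
  assumes "is_gauge_set B" "gauge_fn B y = 1"
  shows "q \<bullet> y \<le> dual_gauge B q"
  unfolding dual_gauge_def
  by (rule cSup_upper[OF _ bdd_above_dual_gauge_set[OF assms(1)]]) (use assms(2) in blast)

lemma dual_gauge_le:
  fixes B :: "'a::euclidean_space set"
  assumes "is_gauge_set B" "\<And>y. gauge_fn B y = 1 \<Longrightarrow> q \<bullet> y \<le> M"
  shows "dual_gauge B q \<le> M"
proof -
  obtain y0 :: 'a where "gauge_fn B y0 = 1" by (rule ex_gauge_fn_eq_1[OF assms(1)])
  then show ?thesis unfolding dual_gauge_def by (intro cSup_least) (use assms(2) in auto)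
qed

lemma inner_le_dual_gauge_mult:
  assumes "is_gauge_set B" "y \<noteq> 0"
  shows "q \<bullet> y \<le> dual_gauge B q * gauge_fn B y"
proof -
  have "q \<bullet> (y /\<^sub>R gauge_fn B y) \<le> dual_gauge B q"
    using inner_le_dual_gauge[OF assms(1) gauge_fn_normalize[OF assms]] .
  then show ?thesis using gauge_fn_pos[OF assms] by (simp add: field_simps)
qed

lemma dual_gauge_nonneg:
  fixes B :: "'a::euclidean_space set"
  assumes "is_gauge_set B"
  shows "0 \<le> dual_gauge B q"
proof (cases "q = 0")
  case True
  obtain y :: 'a where "gauge_fn B y = 1" by (rule ex_gauge_fn_eq_1[OF assms])
  then show ?thesis using inner_le_dual_gauge[OF assms, of y q] True by simp
next
  case False
  have "0 < q \<bullet> q" using False by simp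
  also have "\<dots> \<le> dual_gauge B q * gauge_fn B q" using inner_le_dual_gauge_mult[OF assms False] .
  finally show ?thesis using gauge_fn_pos[OF assms False] by (simp add: zero_less_mult_iff)
qed

lemma dual_gauge_zero:
  assumes "is_gauge_set B"
  shows "dual_gauge B 0 = 0"
  using dual_gauge_nonneg[OF assms, of 0] dual_gauge_le[OF assms, of 0 0] by simp

text \<open>The bipolar inequality: a point outside \<open>B\<close> is strictly separated from \<open>B\<close> by a
  hyperplane \<open>q \<bullet> z = \<beta>\<close> with \<open>\<beta> > 0\<close>, which gives \<open>\<gamma>\<degree>(q) \<le> \<beta> < q \<bullet> x\<close>.\<close>

lemma gauge_fn_le_1_if_inner_le_dual_gauge:
  assumes "is_gauge_set B" "\<And>q. q \<bullet> x \<le> dual_gauge B q"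
  shows "gauge_fn B x \<le> 1"
proof (rule ccontr)
  assume "\<not> gauge_fn B x \<le> 1"
  then have "x \<notin> B" using gauge_fn_le_1[OF assms(1)] by force
  moreover have "convex B" "closed B"
    using assms(1) by (auto simp: is_gauge_set_def compact_imp_closed)
  ultimately obtain a b where ab: "a \<bullet> x < b" "\<forall>z\<in>B. b < a \<bullet> z"
    using separating_hyperplane_closed_point by blast
  define q where "q = - a"
  define \<beta> where "\<beta> = - b"
  have qB: "q \<bullet> z < \<beta>" if "z \<in> B" for z using ab that by (simp add: q_def \<beta>_def)
  have "0 \<in> B" using assms(1) interior_subset by (auto simp: is_gauge_set_def)
  then have \<beta>: "\<beta> > 0" using qB[of 0] by simp
  have "q \<bullet> y \<le> \<beta>" if y: "gauge_fn B y = 1" for y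
  proof (rule ccontr)
    assume "\<not> q \<bullet> y \<le> \<beta>"
    then have "Inf {t. t > 0 \<and> y \<in> (\<lambda>y. t *\<^sub>R y) ` B} < (q \<bullet> y) / \<beta>"
      using y \<beta> by (simp add: gauge_fn_def field_simps)
    then obtain t where t: "t \<in> {t. t > 0 \<and> y \<in> (\<lambda>y. t *\<^sub>R y) ` B}" "t < (q \<bullet> y) / \<beta>"
      using cInf_lessD[OF gauge_scales_nonempty[OF assms(1)]] by blast
    then obtain z where z: "t > 0" "z \<in> B" "y = t *\<^sub>R z" by auto
    have "q \<bullet> y = t * (q \<bullet> z)" using z by simp
    moreover have "t * (q \<bullet> z) < t * \<beta>" using z qB by simp
    moreover have "t * \<beta> < q \<bullet> y" using t(2) \<beta> by (simp add: field_simps)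
    ultimately show False by linarith
  qed
  then have "dual_gauge B q \<le> \<beta>" by (rule dual_gauge_le[OF assms(1)])
  moreover have "\<beta> < q \<bullet> x" using ab by (simp add: q_def \<beta>_def)
  ultimately show False using assms(2)[of q] by linarith
qed

lemma gauge_ball_eq_polar:
  assumes "is_gauge_set B"
  shows "gauge_ball B = {x. \<forall>q. q \<bullet> x \<le> dual_gauge B q}"
proof (intro set_eqI iffI)
  fix x assume x: "x \<in> gauge_ball B"
  show "x \<in> {x. \<forall>q. q \<bullet> x \<le> dual_gauge B q}"
  proof (cases "x = 0")
    case True
    then show ?thesis using dual_gauge_nonneg[OF assms] by simp
  next
    case False
    have "q \<bullet> x \<le> dual_gauge B q" for q
    proof -
      have "q \<bullet> x \<le> dual_gauge B q * gauge_fn B x" using inner_le_dual_gauge_mult[OF assms False] .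
      also have "\<dots> \<le> dual_gauge B q"
        using x dual_gauge_nonneg[OF assms, of q] by (simp add: gauge_ball_def mult_left_le)
      finally show ?thesis .
    qed
    then show ?thesis by simp
  qed
qed (use gauge_fn_le_1_if_inner_le_dual_gauge[OF assms] in \<open>auto simp: gauge_ball_def\<close>)

lemma compact_gauge_ball:
  assumes "is_gauge_set B"
  shows "compact (gauge_ball B)"
proof -
  obtain r R :: real where R: "R > 0" "B \<subseteq> cball 0 R" by (rule gauge_set_radii[OF assms])
  have "gauge_ball B \<subseteq> cball 0 R"
  proof
    fix x assume "x \<in> gauge_ball B"
    then have "norm x / R \<le> 1"
      using norm_le_gauge_fn[OF assms R, of x] by (simp add: gauge_ball_def)
    then show "x \<in> cball 0 R" using R(1) by (simp add: field_simps)
  qed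
  moreover have "closed (gauge_ball B)"
    unfolding gauge_ball_eq_polar[OF assms] Collect_all_eq by (simp add: closed_INT closed_halfspace_le)
  ultimately show ?thesis by (meson bounded_cball bounded_subset compact_eq_bounded_closed)
qed

lemma convex_gauge_ball:
  assumes "is_gauge_set B"
  shows "convex (gauge_ball B)"
  unfolding gauge_ball_eq_polar[OF assms] Collect_all_eq by (simp add: convex_INT convex_halfspace_le)

lemma exposed_face_eq_polar:
  assumes "is_gauge_set B"
  shows "exposed_face B p = {x. p \<bullet> x = 1 \<and> (\<forall>q. q \<bullet> x \<le> dual_gauge B q)}"
  using gauge_ball_eq_polar[OF assms] by (auto simp: exposed_face_def)

lemma exposed_face_eq_Int:
  "exposed_face B p = gauge_ball B \<inter> {x. p \<bullet> x = 1}"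
  by (auto simp: exposed_face_def)

lemma compact_exposed_face:
  assumes "is_gauge_set B"
  shows "compact (exposed_face B p)"
  unfolding exposed_face_eq_Int
  using compact_gauge_ball[OF assms] closed_hyperplane by (rule compact_Int_closed)

lemma convex_exposed_face:
  assumes "is_gauge_set B"
  shows "convex (exposed_face B p)"
  unfolding exposed_face_eq_Int
  using convex_gauge_ball[OF assms] convex_hyperplane by (rule convex_Int)

lemma zero_notin_exposed_face: "0 \<notin> exposed_face B p"
  by (simp add: exposed_face_def)

lemma gauge_fn_eq_1_on_exposed_face:
  assumes "is_gauge_set B" "dual_gauge B p \<le> 1" "x \<in> exposed_face B p"
  shows "gauge_fn B x = 1"
proof -
  have x: "gauge_fn B x \<le> 1" "p \<bullet> x = 1"
    using assms(3) by (auto simp: exposed_face_def gauge_ball_def)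
  then have "x \<noteq> 0" by auto
  have "1 \<le> dual_gauge B p * gauge_fn B x"
    using inner_le_dual_gauge_mult[OF assms(1) \<open>x \<noteq> 0\<close>, of p] x(2) by simp
  also have "\<dots> \<le> gauge_fn B x"
    using assms(2) gauge_fn_pos[OF assms(1) \<open>x \<noteq> 0\<close>] by (simp add: mult_left_le_one_le)
  finally show ?thesis using x(1) by simp
qed

lemma subdiff_dual_gauge_eq_exposed_face:
  assumes "is_gauge_set B" "dual_gauge B p = 1"
  shows "subdiff (dual_gauge B) p = exposed_face B p"
proof (intro set_eqI iffI)
  fix x assume "x \<in> subdiff (dual_gauge B) p"
  then have sub: "1 + x \<bullet> (q - p) \<le> dual_gauge B q" for q
    using assms(2) by (auto simp: subdiff_def)
  have "1 \<le> x \<bullet> p" using sub[of 0] dual_gauge_zero[OF assms(1)] by (simp add: inner_diff_right)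
  moreover have "dual_gauge B (2 *\<^sub>R p) \<le> 2"
  proof (rule dual_gauge_le[OF assms(1)])
    fix y assume "gauge_fn B y = 1"
    then have "p \<bullet> y \<le> 1" using inner_le_dual_gauge[OF assms(1)] assms(2) by metis
    then show "(2 *\<^sub>R p) \<bullet> y \<le> 2" by simp
  qed
  then have "x \<bullet> p \<le> 1" using sub[of "2 *\<^sub>R p"] by (simp add: inner_diff_right algebra_simps)
  ultimately have "x \<bullet> p = 1" by simp
  with sub show "x \<in> exposed_face B p"
    by (auto simp: exposed_face_eq_polar[OF assms(1)] inner_diff_right inner_commute)
next
  fix x assume "x \<in> exposed_face B p"
  then show "x \<in> subdiff (dual_gauge B) p"
    using assms(2) by (auto simp: exposed_face_eq_polar[OF assms(1)] subdiff_def
        inner_diff_right inner_commute)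
qed

lemma normalize_mem_exposed_face:
  assumes "is_gauge_set B" "dual_gauge B p \<le> 1"
    and "x \<in> conic hull exposed_face B p" "x \<noteq> 0"
  shows "x /\<^sub>R gauge_fn B x \<in> exposed_face B p"
proof -
  obtain c z where x: "x = c *\<^sub>R z" "c \<ge> 0" "z \<in> exposed_face B p"
    using assms(3) by (auto simp: conic_hull_explicit)
  then have "c > 0" using assms(4) by (cases "c = 0") auto
  have "gauge_fn B x = c"
    using gauge_fn_scaleR[OF assms(1) \<open>c > 0\<close>, of z]
      gauge_fn_eq_1_on_exposed_face[OF assms(1,2) x(3)] x(1)
    by simp
  then show ?thesis using x \<open>c > 0\<close> by simp
qed

lemma Inter_conic_hull_exposed_faces_trivial_iff:
  assumes "is_gauge_set B" "D \<noteq> {}" "\<And>d. d \<in> D \<Longrightarrow> dual_gauge B (p d) \<le> 1"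
  shows "(\<Inter>d\<in>D. conic hull exposed_face B (p d)) \<subseteq> {0}
    \<longleftrightarrow> (\<Inter>d\<in>D. exposed_face B (p d)) = {}"
proof
  assume trivial: "(\<Inter>d\<in>D. conic hull exposed_face B (p d)) \<subseteq> {0}"
  show "(\<Inter>d\<in>D. exposed_face B (p d)) = {}"
  proof (rule equals0I)
    fix x assume x: "x \<in> (\<Inter>d\<in>D. exposed_face B (p d))"
    then have "x \<in> (\<Inter>d\<in>D. conic hull exposed_face B (p d))" by (blast intro: hull_inc)
    with trivial have "x = 0" by blast
    obtain d where "d \<in> D" using assms(2) by blast
    with x \<open>x = 0\<close> zero_notin_exposed_face show False by blast
  qed
next
  assume empty: "(\<Inter>d\<in>D. exposed_face B (p d)) = {}"
  show "(\<Inter>d\<in>D. conic hull exposed_face B (p d)) \<subseteq> {0}"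
  proof
    fix x assume x: "x \<in> (\<Inter>d\<in>D. conic hull exposed_face B (p d))"
    show "x \<in> {0}"
    proof (rule ccontr)
      assume "x \<notin> {0}"
      then have "x /\<^sub>R gauge_fn B x \<in> exposed_face B (p d)" if "d \<in> D" for d
        using normalize_mem_exposed_face[OF assms(1) assms(3)[OF that]] x that by blast
      with empty show False by blast
    qed
  qed
qed

theorem mainTheorem10:
  fixes B :: "'a::euclidean_space set" and D :: "'a set" and p :: "'a \<Rightarrow> 'a"
  assumes "is_gauge_set B"
    and "finite D"
    and "\<forall>d\<in>D. p d \<in> dual_ball B"
    and "elem_set B D p \<noteq> {}"
    and "\<forall>d\<in>D. elem_set B D p \<noteq> {d}"
  shows "bounded (elem_set B D p) \<longleftrightarrow> (\<Inter>d\<in>D. subdiff (dual_gauge B) (p d)) = {}"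
proof (cases "D = {}")
  case True
  then show ?thesis by (simp add: elem_set_def)
next
  case False
  have dual_one: "dual_gauge B (p d) = 1" if "d \<in> D" for d
  proof (rule ccontr)
    assume "dual_gauge B (p d) \<noteq> 1"
    then have "normal_cone B (p d) = {0}" by (simp add: normal_cone_def)
    moreover have "elem_set B D p \<subseteq> (\<lambda>v. d + v) ` normal_cone B (p d)"
      unfolding elem_set_def using that by (rule INT_lower)
    ultimately have "elem_set B D p \<subseteq> {d}" by simp
    with assms(4,5) that show False by blast
  qed
  have C: "elem_set B D p = (\<Inter>d\<in>D. (\<lambda>v. d + v) ` (conic hull exposed_face B (p d)))"
    unfolding elem_set_def
    by (rule INF_cong) (simp_all add: dual_one normal_cone_def conic_hull_explicit)
  have closed: "closed (conic hull exposed_face B q)" for q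
    by (rule closed_conic_hull) (simp add: compact_exposed_face[OF assms(1)] zero_notin_exposed_face)
  have convex: "convex (conic hull exposed_face B q)" for q
    by (rule convex_conic_hull[OF convex_exposed_face[OF assms(1)]])
  have "bounded (elem_set B D p) \<longleftrightarrow> (\<Inter>d\<in>D. conic hull exposed_face B (p d)) \<subseteq> {0}"
    unfolding C
  proof (rule bounded_Inter_translated_cones_iff)
    show "(\<Inter>d\<in>D. (\<lambda>v. d + v) ` (conic hull exposed_face B (p d))) \<noteq> {}"
      using assms(4) unfolding C .
  qed (simp_all add: closed convex conic_conic_hull)
  also have "\<dots> \<longleftrightarrow> (\<Inter>d\<in>D. exposed_face B (p d)) = {}"
    using dual_one by (intro Inter_conic_hull_exposed_faces_trivial_iff[OF assms(1) False]) simp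
  also have "(\<Inter>d\<in>D. exposed_face B (p d)) = (\<Inter>d\<in>D. subdiff (dual_gauge B) (p d))"
    by (rule INF_cong) (simp_all add: subdiff_dual_gauge_eq_exposed_face[OF assms(1) dual_one])
  finally show ?thesis .
qed

end
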